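(* Let $\mathcal{P}$ be a Class II source set, i.e. there is a permutation $T$ of $\{1,\ldots,M\}$ such that every $P\in\mathcal{P}$ satisfies $P_{T(1)} \ge P_{T(2)} \ge \dots \ge P_{T(M)}$. Then for every $0< D\le 1$ there exists an optimal mechanism, i.e. a mechanism $Q_{\hat X|X}$ attaining $\epsilon^*_{\mathrm{DP}}(\mathcal{P},D)=\min_{Q\in\mathcal{Q}(\mathcal{P},D)}\epsilon_{\mathrm{DP}}(Q)$, whose distortions $D_i=1-Q(i|i)$ satisfy $D_{T(1)} \le D_{T(2)} \le \dots \le D_{T(M)}$.
   Context: Data $X$ takes values in the finite alphabet $\mathcal{X}=\hat{\mathcal{X}}=\{1,\ldots,M\}$ and is drawn from an unknown distribution $P$ belonging to a known set $\mathcal{P}$ of distributions on $\{1,\ldots,M\}$ (a source set); $P_i$ denotes $P(X=i)$. A mechanism is a conditional distribution (row-stochastic $M\times M$ matrix) $Q_{\hat X|X}=Q(j|i)$ mapping input $X$ to output $\hat X$. Distortion is Hamming distortion $d(x,y)=\mathbb{1}[x\neq y]$, so the average distortion under $P$ is $\sum_{i=1}^M P_i D_i$ with $D_i = 1-Q(i|i)$. A mechanism is $(\mathcal{P},D)$-valid if $\sum_{i=1}^M P_i D_i\le D$ for all $P\in\mathcal{P}$; $\mathcal{Q}(\mathcal{P},D)$ is the set of such mechanisms. The differential privacy leakage is $\epsilon_{\mathrm{DP}}(Q)=\min\{\epsilon: Q(\hat x|x_1)\le e^{\epsilon}Q(\hat x|x_2)\ \forall x_1,x_2,\hat x\}$.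 A source set is Class I if its convex hull contains the uniform distribution; it is Class II if it is not Class I and there exists a single permutation $T$ with $P_{T(1)}\ge \dots\ge P_{T(M)}$ for every $P\in\mathcal{P}$. *)

theory Defs
  imports "HOL-Analysis.Analysis" "HOL-Library.Extended_Real" "HOL-Combinatorics.Permutations"
begin

text \<open>Alphabet is {1..M}. A distribution is a function nat => real (only values on {1..M} matter);
a mechanism is Q :: nat => nat => real with Q i j = Q(j|i).\<close>

definition is_dist :: "nat \<Rightarrow> (nat \<Rightarrow> real) \<Rightarrow> bool" where
  "is_dist M P \<longleftrightarrow> (\<forall>i\<in>{1..M}. 0 \<le> P i) \<and> (\<Sum>i=1..M. P i) = 1"

definition is_mechanism :: "nat \<Rightarrow> (nat \<Rightarrow> nat \<Rightarrow> real) \<Rightarrow> bool" where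
  "is_mechanism M Q \<longleftrightarrow> (\<forall>i\<in>{1..M}. \<forall>j\<in>{1..M}. 0 \<le> Q i j) \<and>
                         (\<forall>i\<in>{1..M}. (\<Sum>j=1..M. Q i j) = 1)"

definition distortion :: "(nat \<Rightarrow> nat \<Rightarrow> real) \<Rightarrow> nat \<Rightarrow> real" where
  "distortion Q i = 1 - Q i i"

definition valid_mechs :: "nat \<Rightarrow> (nat \<Rightarrow> real) set \<Rightarrow> real \<Rightarrow> (nat \<Rightarrow> nat \<Rightarrow> real) set" where
  "valid_mechs M \<P> D = {Q. is_mechanism M Q \<and>
      (\<forall>P\<in>\<P>. (\<Sum>i=1..M. P i * distortion Q i) \<le> D)}"

text \<open>DP leakage: least eps with Q(xh|x1) <= exp eps * Q(xh|x2); infinite if no such eps.\<close>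
definition eps_DP :: "nat \<Rightarrow> (nat \<Rightarrow> nat \<Rightarrow> real) \<Rightarrow> ereal" where
  "eps_DP M Q = Inf (ereal ` {e. \<forall>x1\<in>{1..M}. \<forall>x2\<in>{1..M}. \<forall>xh\<in>{1..M}.
                                  Q x1 xh \<le> exp e * Q x2 xh})"

text \<open>Class I: the convex hull of the source set contains the uniform distribution
  (convex hull written out as finite convex combinations).\<close>
definition class_I :: "nat \<Rightarrow> (nat \<Rightarrow> real) set \<Rightarrow> bool" where
  "class_I M \<P> \<longleftrightarrow> (\<exists>S w. finite S \<and> S \<subseteq> \<P> \<and> (\<forall>P\<in>S. 0 \<le> w P) \<and> (\<Sum>P\<in>S. w P) = 1 \<and>
      (\<forall>i\<in>{1..M}. (\<Sum>P\<in>S. w P * P i) = 1 / real M))"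

definition ordered_by :: "nat \<Rightarrow> (nat \<Rightarrow> nat) \<Rightarrow> (nat \<Rightarrow> real) \<Rightarrow> bool" where
  "ordered_by M T P \<longleftrightarrow> (\<forall>k\<in>{1..M}. \<forall>l\<in>{1..M}. k \<le> l \<longrightarrow> P (T l) \<le> P (T k))"

definition class_II :: "nat \<Rightarrow> (nat \<Rightarrow> real) set \<Rightarrow> bool" where
  "class_II M \<P> \<longleftrightarrow> \<not> class_I M \<P> \<and> (\<exists>T. T permutes {1..M} \<and> (\<forall>P\<in>\<P>. ordered_by M T P))"

end

theory Submission
  imports Defs
begin

text \<open>An optimal mechanism exists because the sublevel sets of the leakage are closed and
  the valid mechanisms (restricted to the alphabet) form a compact set. Relabelling inputs and
  outputs of a mechanism by one permutation leaves the leakage unchanged. Among the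
  valid relabellings of an optimal mechanism choose one maximising
  \<open>\<Sum>\<^sub>i rank(i) D\<^sub>i\<close>, where \<open>rank = T\<^sup>-\<^sup>1\<close>. If its distortions were not sorted along \<open>T\<close>,
  exchanging the two offending labels would strictly increase the potential, while it cannot
  increase the average distortion of any source, since every source puts at least as much mass
  on the label of smaller rank.\<close>

definition dp_bounded :: "nat \<Rightarrow> real \<Rightarrow> (nat \<Rightarrow> nat \<Rightarrow> real) set" where
  "dp_bounded M c = {Q. \<forall>x1\<in>{1..M}. \<forall>x2\<in>{1..M}. \<forall>xh\<in>{1..M}. Q x1 xh \<le> exp c * Q x2 xh}"

lemma eps_DP_le_iff_dp_bounded:
  assumes nonneg: "\<forall>i\<in>{1..M}. \<forall>j\<in>{1..M}. 0 \<le> Q i j"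
  shows "eps_DP M Q \<le> ereal c \<longleftrightarrow> Q \<in> dp_bounded M c"
proof
  assume "Q \<in> dp_bounded M c"
  then show "eps_DP M Q \<le> ereal c"
    unfolding eps_DP_def dp_bounded_def by (intro Inf_lower) auto
next
  define S where "S = {e. \<forall>x1\<in>{1..M}. \<forall>x2\<in>{1..M}. \<forall>xh\<in>{1..M}. Q x1 xh \<le> exp e * Q x2 xh}"
  assume "eps_DP M Q \<le> ereal c"
  hence inf: "Inf (ereal ` S) \<le> ereal c" by (simp add: eps_DP_def S_def)
  hence "S \<noteq> {}" by (auto simp: top_ereal_def)
  show "Q \<in> dp_bounded M c"
    unfolding dp_bounded_def
  proof (intro CollectI ballI)
    fix x1 x2 xh assume x: "x1 \<in> {1..M}" "x2 \<in> {1..M}" "xh \<in> {1..M}"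
    show "Q x1 xh \<le> exp c * Q x2 xh"
    proof (cases "Q x2 xh = 0")
      case True
      from \<open>S \<noteq> {}\<close> obtain e where "e \<in> S" by blast
      with x have "Q x1 xh \<le> exp e * Q x2 xh" unfolding S_def by blast
      with True show ?thesis by simp
    next
      case False
      hence pos: "Q x2 xh > 0" using nonneg x by force
      show ?thesis
      proof (rule dense_ge)
        fix y assume y: "exp c * Q x2 xh < y"
        have ypos: "y > 0" using y pos by (smt (verit) exp_gt_zero mult_pos_pos)
        define c' where "c' = ln (y / Q x2 xh)"
        have "exp c < y / Q x2 xh" using y pos by (simp add: field_simps)
        hence "c < c'" unfolding c'_def using ypos pos
          by (metis divide_pos_pos exp_less_cancel_iff exp_ln)
        hence "Inf (ereal ` S) < ereal c'" using inf by (meson ereal_less_eq(3) le_less_trans not_le)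
        then obtain e where e: "e \<in> S" "e < c'" by (auto simp: Inf_less_iff)
        have "Q x1 xh \<le> exp e * Q x2 xh" using e x by (auto simp: S_def)
        also have "\<dots> \<le> exp c' * Q x2 xh" using e pos by simp
        also have "\<dots> = y" unfolding c'_def using ypos pos by simp
        finally show "Q x1 xh \<le> y" .
      qed
    qed
  qed
qed

lemma continuous_on_matrix_entry [continuous_intros]:
  "continuous_on S (\<lambda>Q :: 'a \<Rightarrow> 'b \<Rightarrow> real. Q i j)"
  by (rule continuous_on_subset[of UNIV])
    (auto intro: continuous_on_product_then_coordinatewise)

lemma closed_dp_bounded: "closed (dp_bounded M c)"
  unfolding dp_bounded_def Ball_def
  by (intro closed_Collect_all closed_Collect_imp closed_Collect_le continuous_intros) auto

lemma compact_matrix_box: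
  assumes "\<And>i j. compact (S i j)"
  shows "compact {Q :: 'a \<Rightarrow> 'b \<Rightarrow> real. \<forall>i j. Q i j \<in> S i j}"
proof -
  have rows: "compact (PiE UNIV (S i))" for i
    using compactin_PiE[of "\<lambda>_. euclidean" UNIV "S i"] assms
    by (simp add: euclidean_product_topology)
  have "compact (PiE UNIV (\<lambda>i. PiE UNIV (S i)))"
    using compactin_PiE[of "\<lambda>_. euclidean" UNIV "\<lambda>i. PiE UNIV (S i)"] rows
    by (simp add: euclidean_product_topology)
  moreover have "PiE UNIV (\<lambda>i. PiE UNIV (S i)) = {Q. \<forall>i j. Q i j \<in> S i j}"
    by (auto simp: PiE_iff)
  ultimately show ?thesis by simp
qed

lemma closed_valid_mechs: "closed (valid_mechs M \<P> D)"
proof -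
  have "valid_mechs M \<P> D = {Q. (\<forall>i\<in>{1..M}. \<forall>j\<in>{1..M}. 0 \<le> Q i j) \<and>
      (\<forall>i\<in>{1..M}. (\<Sum>j=1..M. Q i j) = 1) \<and> (\<forall>P\<in>\<P>. (\<Sum>i=1..M. P i * (1 - Q i i)) \<le> D)}"
    unfolding valid_mechs_def is_mechanism_def distortion_def by auto
  also have "closed \<dots>"
    unfolding Ball_def
    by (intro closed_Collect_conj closed_Collect_all closed_Collect_imp closed_Collect_le
        closed_Collect_eq continuous_intros) auto
  finally show ?thesis .
qed

text \<open>Entries outside the alphabet are unconstrained, so the set of valid mechanisms is not
  bounded; zeroing them out changes neither validity nor leakage.\<close>

definition truncate :: "nat \<Rightarrow> (nat \<Rightarrow> nat \<Rightarrow> real) \<Rightarrow> nat \<Rightarrow> nat \<Rightarrow> real" where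
  "truncate M Q = (\<lambda>i j. if i \<in> {1..M} \<and> j \<in> {1..M} then Q i j else 0)"

definition truncated_mechs :: "nat \<Rightarrow> (nat \<Rightarrow> nat \<Rightarrow> real) set" where
  "truncated_mechs M = {Q. \<forall>i j. Q i j \<in> (if i \<in> {1..M} \<and> j \<in> {1..M} then {0..1} else {0})}"

lemma compact_truncated_mechs: "compact (truncated_mechs M)"
  unfolding truncated_mechs_def by (rule compact_matrix_box) auto

lemma eps_DP_truncate: "eps_DP M (truncate M Q) = eps_DP M Q"
  unfolding eps_DP_def truncate_def by simp

lemma mechanism_entry_le_1:
  assumes "is_mechanism M Q" "i \<in> {1..M}" "j \<in> {1..M}"
  shows "Q i j \<le> 1"
proof -
  have "Q i j \<le> (\<Sum>j=1..M. Q i j)"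
    using assms by (intro member_le_sum) (auto simp: is_mechanism_def)
  with assms show ?thesis by (auto simp: is_mechanism_def)
qed

lemma truncate_valid:
  assumes "Q \<in> valid_mechs M \<P> D"
  shows "truncate M Q \<in> valid_mechs M \<P> D \<inter> truncated_mechs M"
proof -
  have mech: "is_mechanism M Q" and val: "\<forall>P\<in>\<P>. (\<Sum>i=1..M. P i * distortion Q i) \<le> D"
    using assms by (auto simp: valid_mechs_def)
  have "(\<Sum>j=1..M. truncate M Q i j) = (\<Sum>j=1..M. Q i j)" if "i \<in> {1..M}" for i
    using that by (intro sum.cong) (auto simp: truncate_def)
  with mech have "is_mechanism M (truncate M Q)"
    unfolding is_mechanism_def by (auto simp: truncate_def)
  moreover have "(\<Sum>i=1..M. P i * distortion (truncate M Q) i) = (\<Sum>i=1..M. P i * distortion Q i)" for P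
    by (intro sum.cong) (auto simp: truncate_def distortion_def)
  moreover have "truncate M Q \<in> truncated_mechs M"
    using mech mechanism_entry_le_1[OF mech]
    unfolding truncated_mechs_def truncate_def is_mechanism_def by auto
  ultimately show ?thesis using val by (auto simp: valid_mechs_def)
qed

lemma truncate_in_dp_bounded:
  assumes "Q \<in> valid_mechs M \<P> D" "eps_DP M Q \<le> ereal c"
  shows "truncate M Q \<in> dp_bounded M c"
proof -
  have "\<forall>i\<in>{1..M}. \<forall>j\<in>{1..M}. 0 \<le> truncate M Q i j"
    using truncate_valid[OF assms(1)] by (auto simp: valid_mechs_def is_mechanism_def)
  then show ?thesis
    using eps_DP_le_iff_dp_bounded assms(2) eps_DP_truncate[of M Q] by metis
qed

lemma identity_mech_valid:
  assumes "0 \<le> D"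
  shows "(\<lambda>i j. if i = j then 1 else 0) \<in> valid_mechs M \<P> D"
  using assms by (auto simp: valid_mechs_def is_mechanism_def distortion_def)

lemma eps_DP_attains_Inf:
  assumes "0 \<le> D"
  obtains Q where "Q \<in> valid_mechs M \<P> D"
    and "eps_DP M Q \<le> Inf (eps_DP M ` valid_mechs M \<P> D)"
proof -
  define V where "V = valid_mechs M \<P> D"
  define m where "m = Inf (eps_DP M ` V)"
  have nonneg: "\<forall>i\<in>{1..M}. \<forall>j\<in>{1..M}. 0 \<le> Q i j" if "Q \<in> V" for Q
    using that by (auto simp: V_def valid_mechs_def is_mechanism_def)
  have idV: "(\<lambda>i j. if i = j then 1 else 0) \<in> V"
    unfolding V_def using identity_mech_valid[OF assms] .
  text \<open>The optimum lies in every sublevel set \<open>dp_bounded M c\<close> with \<open>m < c\<close>; these sets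
    have the finite intersection property on the compact set of truncated valid mechanisms.\<close>
  define F where "F = dp_bounded M ` {c. m < ereal c}"
  have "(V \<inter> truncated_mechs M) \<inter> \<Inter>F \<noteq> {}"
  proof (rule compact_imp_fip)
    show "compact (V \<inter> truncated_mechs M)"
      unfolding V_def by (intro closed_Int_compact closed_valid_mechs compact_truncated_mechs)
    show "closed B" if "B \<in> F" for B using that closed_dp_bounded by (auto simp: F_def)
  next
    fix F' assume F': "finite F'" "F' \<subseteq> F"
    then obtain C where C: "C \<subseteq> {c. m < ereal c}" "finite C" "F' = dp_bounded M ` C"
      unfolding F_def by (meson finite_subset_image)
    show "V \<inter> truncated_mechs M \<inter> \<Inter>F' \<noteq> {}"
    proof (cases "C = {}")
      case True
      then show ?thesis using C truncate_valid[OF idV[unfolded V_def]] by (auto simp: V_def)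
    next
      case False
      with C have "m < ereal (Min C)" using Min_in by blast
      then obtain Q where Q: "Q \<in> V" "eps_DP M Q < ereal (Min C)"
        unfolding m_def by (auto simp: Inf_less_iff)
      have "truncate M Q \<in> dp_bounded M c" if "c \<in> C" for c
        using Q Min_le[OF C(2) that] unfolding V_def
        by (intro truncate_in_dp_bounded) (auto intro: order.trans[OF less_imp_le])
      with C show ?thesis using truncate_valid[OF Q(1)[unfolded V_def]] by (auto simp: V_def)
    qed
  qed
  then obtain Q where Q: "Q \<in> V" "\<forall>B\<in>F. Q \<in> B" by blast
  have "eps_DP M Q \<le> m"
  proof (rule dense_ge)
    fix y assume y: "m < y"
    show "eps_DP M Q \<le> y"
    proof (cases y)
      case (real c)
      then have "Q \<in> dp_bounded M c" using Q y by (auto simp: F_def)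
      then show ?thesis using eps_DP_le_iff_dp_bounded nonneg Q real by blast
    qed (use y in auto)
  qed
  with Q that show thesis by (simp add: V_def m_def)
qed

lemma exists_optimal_mech:
  assumes "0 \<le> D"
  shows "\<exists>Q\<in>valid_mechs M \<P> D. \<forall>Q'\<in>valid_mechs M \<P> D. eps_DP M Q \<le> eps_DP M Q'"
proof -
  obtain Q where "Q \<in> valid_mechs M \<P> D" "eps_DP M Q \<le> Inf (eps_DP M ` valid_mechs M \<P> D)"
    using eps_DP_attains_Inf[OF assms] .
  then show ?thesis by (metis INF_lower order_trans)
qed

definition relabel :: "(nat \<Rightarrow> nat \<Rightarrow> real) \<Rightarrow> (nat \<Rightarrow> nat) \<Rightarrow> nat \<Rightarrow> nat \<Rightarrow> real" where
  "relabel Q p = (\<lambda>i j. Q (p i) (p j))"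

lemma relabel_mechanism:
  assumes "p permutes {1..M}" "is_mechanism M Q"
  shows "is_mechanism M (relabel Q p)"
proof -
  have "(\<Sum>j=1..M. Q (p i) (p j)) = (\<Sum>j=1..M. Q (p i) j)" for i
    using sum.permute[OF assms(1), of "Q (p i)"] by (simp add: o_def)
  moreover have "p i \<in> {1..M} \<longleftrightarrow> i \<in> {1..M}" for i
    using permutes_in_image[OF assms(1)] .
  ultimately show ?thesis
    using assms(2) unfolding is_mechanism_def relabel_def by auto
qed

lemma eps_DP_relabel:
  assumes "p permutes {1..M}"
  shows "eps_DP M (relabel Q p) = eps_DP M Q"
proof -
  have "(\<forall>x1\<in>{1..M}. \<forall>x2\<in>{1..M}. \<forall>xh\<in>{1..M}. Q (p x1) (p xh) \<le> exp e * Q (p x2) (p xh))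
    \<longleftrightarrow> (\<forall>x1\<in>p`{1..M}. \<forall>x2\<in>p`{1..M}. \<forall>xh\<in>p`{1..M}. Q x1 xh \<le> exp e * Q x2 xh)" for e
    by simp
  then show ?thesis
    unfolding eps_DP_def relabel_def permutes_image[OF assms] by simp
qed

lemma distortion_relabel: "distortion (relabel Q p) i = distortion Q (p i)"
  by (simp add: distortion_def relabel_def)

lemma sum_mult_transpose:
  fixes w d :: "'a \<Rightarrow> real"
  assumes "finite A" "a \<in> A" "b \<in> A" "a \<noteq> b"
  shows "(\<Sum>i\<in>A. w i * d (Transposition.transpose a b i)) = (\<Sum>i\<in>A. w i * d i) + (w a - w b) * (d b - d a)"
proof -
  have split: "(\<Sum>i\<in>A. f i) = f a + f b + (\<Sum>i\<in>A - {a} - {b}. f i)" for f :: "'a \<Rightarrow> real"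
    using assms by (simp add: sum.remove[of A a] sum.remove[of "A - {a}" b])
  have "(\<Sum>i\<in>A - {a} - {b}. w i * d (Transposition.transpose a b i)) = (\<Sum>i\<in>A - {a} - {b}. w i * d i)"
    by (intro sum.cong) auto
  then show ?thesis
    unfolding split[of "\<lambda>i. w i * d (Transposition.transpose a b i)"] split[of "\<lambda>i. w i * d i"]
    by (simp add: algebra_simps)
qed

lemma valid_relabel_transpose:
  assumes T: "T permutes {1..M}" "\<forall>P\<in>\<P>. ordered_by M T P"
    and p: "p permutes {1..M}" "relabel Q p \<in> valid_mechs M \<P> D"
    and kl: "k \<in> {1..M}" "l \<in> {1..M}" "k < l"
    and unsorted: "distortion Q (p (T l)) < distortion Q (p (T k))"
  shows "relabel Q (p \<circ> Transposition.transpose (T k) (T l)) \<in> valid_mechs M \<P> D"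
proof -
  let ?a = "T k" and ?b = "T l" and ?d = "\<lambda>i. distortion Q (p i)"
  have ab: "?a \<in> {1..M}" "?b \<in> {1..M}" "?a \<noteq> ?b"
    using kl permutes_in_image[OF T(1)] permutes_inj[OF T(1), THEN inj_eq] by auto
  have "is_mechanism M (relabel Q p)" using p(2) by (simp add: valid_mechs_def)
  then have mech: "is_mechanism M (relabel Q (p \<circ> Transposition.transpose ?a ?b))"
    using relabel_mechanism[OF permutes_swap_id[OF ab(1,2)]] by (simp add: relabel_def)
  have "(\<Sum>i=1..M. P i * ?d (Transposition.transpose ?a ?b i)) \<le> D" if P: "P \<in> \<P>" for P
  proof -
    have "P ?b \<le> P ?a" using T(2) P kl unfolding ordered_by_def by simp
    then have "(P ?a - P ?b) * (?d ?b - ?d ?a) \<le> 0"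
      using unsorted by (intro mult_nonneg_nonpos) auto
    moreover have "(\<Sum>i=1..M. P i * ?d i) \<le> D"
      using p(2) P by (simp add: valid_mechs_def distortion_relabel)
    moreover have "(\<Sum>i=1..M. P i * ?d (Transposition.transpose ?a ?b i))
        = (\<Sum>i=1..M. P i * ?d i) + (P ?a - P ?b) * (?d ?b - ?d ?a)"
      by (rule sum_mult_transpose[OF _ ab]) simp
    ultimately show ?thesis by linarith
  qed
  with mech show ?thesis by (simp add: valid_mechs_def distortion_relabel)
qed

lemma exists_sorted_valid_relabel:
  assumes T: "T permutes {1..M}" "\<forall>P\<in>\<P>. ordered_by M T P"
    and Q: "Q \<in> valid_mechs M \<P> D"
  shows "\<exists>p. p permutes {1..M} \<and> relabel Q p \<in> valid_mechs M \<P> D \<and>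
           (\<forall>k\<in>{1..M}. \<forall>l\<in>{1..M}. k \<le> l \<longrightarrow> distortion Q (p (T k)) \<le> distortion Q (p (T l)))"
proof -
  define PS where "PS = {p. p permutes {1..M} \<and> relabel Q p \<in> valid_mechs M \<P> D}"
  define potential where
    "potential = (\<lambda>p. \<Sum>i=1..M. real (inv T i) * distortion Q (p i))"
  have fin: "finite PS"
    unfolding PS_def by (rule finite_subset[OF _ finite_permutations[of "{1..M}"]]) auto
  moreover have "id \<in> PS"
    using Q by (simp add: PS_def relabel_def permutes_id)
  ultimately obtain p where p: "p \<in> PS" "Max (potential ` PS) = potential p"
    using obtains_MAX by blast
  have p_max: "potential q \<le> potential p" if "q \<in> PS" for q
    using Max_ge[of "potential ` PS"] fin that p(2) by simp
  have "distortion Q (p (T k)) \<le> distortion Q (p (T l))"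
    if kl: "k \<in> {1..M}" "l \<in> {1..M}" "k \<le> l" for k l
  proof (rule ccontr)
    assume unsorted: "\<not> ?thesis"
    with kl have "k < l" by (cases "k = l") auto
    let ?q = "p \<circ> Transposition.transpose (T k) (T l)"
    have ab: "T k \<in> {1..M}" "T l \<in> {1..M}" "T k \<noteq> T l"
      using kl \<open>k < l\<close> permutes_in_image[OF T(1)] permutes_inj[OF T(1), THEN inj_eq] by auto
    have "?q \<in> PS"
      using p(1) valid_relabel_transpose[OF T _ _ kl(1,2) \<open>k < l\<close>] unsorted
        permutes_compose[OF permutes_swap_id[OF ab(1,2)]]
      by (auto simp: PS_def)
    then have "potential ?q \<le> potential p" by (rule p_max)
    moreover have "potential ?q = potential p + (real (inv T (T k)) - real (inv T (T l))) *
        (distortion Q (p (T l)) - distortion Q (p (T k)))"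
      unfolding potential_def o_def by (rule sum_mult_transpose[OF _ ab]) simp
    moreover have "0 < (real l - real k) * (distortion Q (p (T k)) - distortion Q (p (T l)))"
      using \<open>k < l\<close> unsorted by (intro mult_pos_pos) auto
    ultimately show False
      by (simp add: permutes_inverses(2)[OF T(1)] algebra_simps)
  qed
  with p(1) show ?thesis by (auto simp: PS_def)
qed

theorem lemma2:
  fixes M :: nat and \<P> :: "(nat \<Rightarrow> real) set" and T :: "nat \<Rightarrow> nat" and D :: real
  assumes dists: "\<forall>P\<in>\<P>. is_dist M P"
    and classII: "class_II M \<P>"
    and T: "T permutes {1..M}" "\<forall>P\<in>\<P>. ordered_by M T P"
    and D: "0 < D" "D \<le> 1"
  shows "\<exists>Q\<in>valid_mechs M \<P> D.
           (\<forall>Q'\<in>valid_mechs M \<P> D. eps_DP M Q \<le> eps_DP M Q') \<and>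
           (\<forall>k\<in>{1..M}. \<forall>l\<in>{1..M}. k \<le> l \<longrightarrow> distortion Q (T k) \<le> distortion Q (T l))"
proof -
  obtain Q where Q: "Q \<in> valid_mechs M \<P> D"
    and opt: "\<forall>Q'\<in>valid_mechs M \<P> D. eps_DP M Q \<le> eps_DP M Q'"
    using exists_optimal_mech D(1) by (meson less_imp_le)
  obtain p where p: "p permutes {1..M}" "relabel Q p \<in> valid_mechs M \<P> D"
    and sorted: "\<forall>k\<in>{1..M}. \<forall>l\<in>{1..M}. k \<le> l \<longrightarrow> distortion Q (p (T k)) \<le> distortion Q (p (T l))"
    using exists_sorted_valid_relabel[OF T Q] by blast
  have "eps_DP M (relabel Q p) = eps_DP M Q" using eps_DP_relabel[OF p(1)] .
  with p(2) opt sorted show ?thesis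
    by (intro bexI[of _ "relabel Q p"]) (auto simp: distortion_relabel)
qed

end
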